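(* Let $A,B,C$ be logically independent events. Given $(x,y)\in[0,1]^2$, the assessment $P(C|AB)=x$, $P(B|A)=y$, $P(C|A)=z$ is coherent if and only if \[ xy\le z\le xy+1-y . \] Consequently, if $0\le\alpha_i\le\beta_i\le1$ ($i=1,2$), the set of values $z$ for which there exist $x\in[\alpha_1,\beta_1]$, $y\in[\alpha_2,\beta_2]$ making $(x,y,z)$ a coherent assessment on $(C|AB,B|A,C|A)$ is exactly $[\alpha_3,\beta_3]$ with $\alpha_3=\alpha_1\alpha_2$ and $\beta_3=\beta_1\alpha_2+1-\alpha_2$.
   Context: Events are elements of a Boolean algebra; $AB$ denotes conjunction, $A\vee B$ disjunction, $A^c$ negation. $A,B,C$ are logically independent if all eight conjunctions $A^{*}B^{*}C^{*}$ (each $X^{*}\in\{X,X^c\}$) are possible (nonempty). A conditional event $E|H$ requires $H\neq\emptyset$; conditional probabilities are treated as primitive (no requirement that $P(H)>0$). Coherence (de Finetti): an assessment $(p_1,\dots,p_n)$ on conditional events $E_1|H_1,\dots,E_n|H_n$ is coherent if for every nonempty $J\subseteq\{1,\dots,n\}$ and every real numbers $s_j$ ($j\in J$), the random gain $G=\sum_{j\in J}s_j\,I_{H_j}(I_{E_j}-p_j)$ (with $I$ denoting indicator functions) satisfies $\max G\ge 0$, where the maximum is taken over the possible worlds (atoms) contained in $\bigvee_{j\in J}H_j$. *)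

theory Defs
  imports Main "HOL-Library.Indicator_Function"
begin

text \<open>Events are subsets of a space of possible worlds of type 'w (a Boolean algebra of sets).
  A conditional assessment is a list of triples (E, H, p) meaning P(E|H) = p.\<close>

definition logically_independent3 :: "'w set \<Rightarrow> 'w set \<Rightarrow> 'w set \<Rightarrow> bool" where
  "logically_independent3 A B C \<longleftrightarrow>
     (\<forall>A' \<in> {A, - A}. \<forall>B' \<in> {B, - B}. \<forall>C' \<in> {C, - C}. A' \<inter> B' \<inter> C' \<noteq> {})"

definition cond_gain :: "('w set \<times> 'w set \<times> real) list \<Rightarrow> nat set \<Rightarrow> (nat \<Rightarrow> real) \<Rightarrow> 'w \<Rightarrow> real" where
  "cond_gain L J s \<omega> =
     (\<Sum>j\<in>J. s j * indicator (fst (snd (L ! j))) \<omega> *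
               (indicator (fst (L ! j)) \<omega> - snd (snd (L ! j))))"

text \<open>de Finetti coherence: for every nonempty subfamily J and all stakes s, the random gain
  attains a nonnegative value at some possible world in the disjunction of the conditioning events
  (the gain takes finitely many values, so this is "max G \<ge> 0").\<close>
definition coherent :: "('w set \<times> 'w set \<times> real) list \<Rightarrow> bool" where
  "coherent L \<longleftrightarrow>
     (\<forall>j < length L. fst (snd (L ! j)) \<noteq> {}) \<and>
     (\<forall>J. J \<subseteq> {..<length L} \<longrightarrow> J \<noteq> {} \<longrightarrow>
        (\<forall>s :: nat \<Rightarrow> real. \<exists>\<omega> \<in> (\<Union>j\<in>J. fst (snd (L ! j))). cond_gain L J s \<omega> \<ge> 0))"

end

(*
  All conditioning events lie inside A, so only the four atoms of A cut out by B and C matter,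
  and logical independence makes each of them possible.

  Necessity: betting with stakes (1, x, -1) resp. (-1, 1 - x, 1) on C|AB, B|A, C|A yields a gain
  that is bounded on A by z - xy resp. xy + 1 - y - z, so coherence forces both bounds to be
  nonnegative.

  Sufficiency: a subfamily J of bets has a nonnegative gain somewhere in the union of its
  conditioning events as soon as some probability on atoms inside that union makes every bet in J
  fair, because the expected gain then vanishes. Giving the atoms BC, BC', B'C, B'C' of A the
  weights xy, y - xy, z - xy, 1 - y - z + xy works for every J containing B|A or C|A; for J = {C|AB}
  alone, whose conditioning event may have weight 0, use instead the weights x, 1 - x on the atoms
  ABC, ABC'.

  The range statement is then elementary: xy >= a1 a2 and xy + 1 - y = 1 - y (1 - x) <= 1 - a2 (1 - b1),
  and every value in between is attained with y = a2.
*)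

theory Submission
  imports Defs
begin

abbreviation chain_assessment ::
  "'w set \<Rightarrow> 'w set \<Rightarrow> 'w set \<Rightarrow> real \<Rightarrow> real \<Rightarrow> real \<Rightarrow> ('w set \<times> 'w set \<times> real) list" where
  "chain_assessment A B C x y z \<equiv> [(C, A \<inter> B, x), (B, A, y), (C, A, z)]"

lemma sum_UNIV_bool_pair:
  "(\<Sum>i\<in>UNIV. f i) = f (True, True) + f (True, False) + f (False, True) + f (False, False)"
  for f :: "bool \<times> bool \<Rightarrow> 'a::comm_monoid_add"
  by (simp add: UNIV_Times_UNIV[symmetric] UNIV_bool sum.cartesian_product[symmetric] add_ac)

lemma logically_independent3_atoms:
  assumes "logically_independent3 A B C"
  obtains \<omega> :: "bool \<times> bool \<Rightarrow> 'w"
  where "\<And>i. \<omega> i \<in> A" "\<And>i. \<omega> i \<in> B \<longleftrightarrow> fst i" "\<And>i. \<omega> i \<in> C \<longleftrightarrow> snd i"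
proof -
  have "\<forall>i. \<exists>w. w \<in> A \<and> (w \<in> B \<longleftrightarrow> fst i) \<and> (w \<in> C \<longleftrightarrow> snd i)"
  proof
    fix i :: "bool \<times> bool"
    have "A \<inter> (if fst i then B else - B) \<inter> (if snd i then C else - C) \<noteq> {}"
      using assms unfolding logically_independent3_def by simp
    then show "\<exists>w. w \<in> A \<and> (w \<in> B \<longleftrightarrow> fst i) \<and> (w \<in> C \<longleftrightarrow> snd i)"
      by (auto split: if_splits)
  qed
  then show thesis
    using that by metis
qed

lemma exists_pos_weight_nonneg:
  fixes p g :: "'i \<Rightarrow> real"
  assumes "finite I" "\<And>i. i \<in> I \<Longrightarrow> 0 \<le> p i" "\<exists>i\<in>I. 0 < p i"
    and "0 \<le> (\<Sum>i\<in>I. p i * g i)"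
  shows "\<exists>i\<in>I. 0 < p i \<and> 0 \<le> g i"
proof (rule ccontr)
  assume neg: "\<not> ?thesis"
  have "(\<Sum>i\<in>I. p i * g i) < (\<Sum>i\<in>I. 0)"
  proof (rule sum_strict_mono_ex1)
    show "\<forall>i\<in>I. p i * g i \<le> 0"
      using assms(2) neg by (metis less_eq_real_def mult_nonneg_nonpos mult_zero_left not_le)
    show "\<exists>i\<in>I. p i * g i < 0"
      using assms(3) neg by (meson mult_pos_neg not_le)
  qed (use assms(1) in simp)
  then show False
    using assms(4) by simp
qed

lemma cond_gain_eq_sum_unit_bets:
  "cond_gain L J s w = (\<Sum>j\<in>J. s j * cond_gain L {j} (\<lambda>_. 1) w)"
  by (simp add: cond_gain_def mult.assoc)

lemma expected_cond_gain_eq_zero: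
  assumes "\<And>j. j \<in> J \<Longrightarrow> (\<Sum>i\<in>I. p i * cond_gain L {j} (\<lambda>_. 1) (\<omega> i)) = 0"
  shows "(\<Sum>i\<in>I. p i * cond_gain L J s (\<omega> i)) = 0"
proof -
  have "(\<Sum>i\<in>I. p i * cond_gain L J s (\<omega> i))
      = (\<Sum>j\<in>J. s j * (\<Sum>i\<in>I. p i * cond_gain L {j} (\<lambda>_. 1) (\<omega> i)))"
    by (simp add: cond_gain_eq_sum_unit_bets[of L J] sum_distrib_left sum_distrib_right
        sum.swap[of _ I] ac_simps)
  also have "\<dots> = 0"
    using assms by simp
  finally show ?thesis .
qed

lemma coherentI_fair_distributions:
  fixes \<omega> :: "'i \<Rightarrow> 'w" and L :: "('w set \<times> 'w set \<times> real) list"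
  assumes "finite I"
    and "\<And>j. j < length L \<Longrightarrow> fst (snd (L ! j)) \<noteq> {}"
    and "\<And>J. J \<subseteq> {..<length L} \<Longrightarrow> J \<noteq> {} \<Longrightarrow> \<exists>p.
           (\<forall>i\<in>I. 0 \<le> p i) \<and> sum p I = 1 \<and>
           (\<forall>i\<in>I. 0 < p i \<longrightarrow> \<omega> i \<in> (\<Union>j\<in>J. fst (snd (L ! j)))) \<and>
           (\<forall>j\<in>J. (\<Sum>i\<in>I. p i * cond_gain L {j} (\<lambda>_. 1) (\<omega> i)) = 0)"
  shows "coherent L"
  unfolding coherent_def
proof (intro conjI allI impI)
  fix J s
  assume "J \<subseteq> {..<length L}" "J \<noteq> {}"
  from assms(3)[OF this] obtain p where nonneg: "\<forall>i\<in>I. 0 \<le> p i" and total: "sum p I = 1"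
    and support: "\<forall>i\<in>I. 0 < p i \<longrightarrow> \<omega> i \<in> (\<Union>j\<in>J. fst (snd (L ! j)))"
    and fair: "\<forall>j\<in>J. (\<Sum>i\<in>I. p i * cond_gain L {j} (\<lambda>_. 1) (\<omega> i)) = 0"
    by blast
  have "\<exists>i\<in>I. 0 < p i"
  proof (rule ccontr)
    assume "\<not> (\<exists>i\<in>I. 0 < p i)"
    then have "sum p I \<le> 0"
      by (intro sum_nonpos) (auto simp: not_less)
    with total show False
      by simp
  qed
  moreover have "(\<Sum>i\<in>I. p i * cond_gain L J s (\<omega> i)) = 0"
    using fair expected_cond_gain_eq_zero[where I = I and p = p and \<omega> = \<omega>] by blast
  ultimately have "\<exists>i\<in>I. 0 < p i \<and> 0 \<le> cond_gain L J s (\<omega> i)"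
    using exists_pos_weight_nonneg[OF assms(1), where p = p and g = "\<lambda>i. cond_gain L J s (\<omega> i)"]
      nonneg by simp
  then show "\<exists>w\<in>\<Union>j\<in>J. fst (snd (L ! j)). 0 \<le> cond_gain L J s w"
    using support by blast
qed (use assms(2) in blast)

lemma coherent_gain_bound_nonneg:
  assumes "coherent L" "J \<subseteq> {..<length L}" "J \<noteq> {}"
    and "\<And>w. w \<in> (\<Union>j\<in>J. fst (snd (L ! j))) \<Longrightarrow> cond_gain L J s w \<le> c"
  shows "0 \<le> c"
  using assms unfolding coherent_def by (meson order_trans)

lemma chain_assessment_bounds_if_coherent:
  fixes x y z :: real
  assumes coh: "coherent (chain_assessment A B C x y z)"
  shows "x * y \<le> z" and "z \<le> x * y + 1 - y"
proof -
  let ?L = "chain_assessment A B C x y z"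
  have J: "{0, 1, 2} \<subseteq> {..<length ?L}" "{0, 1, 2 :: nat} \<noteq> {}"
    by auto
  have gain: "cond_gain ?L {0, 1, 2} s w =
      s 0 * indicator B w * (indicator C w - x) + s 1 * (indicator B w - y) + s 2 * (indicator C w - z)"
    if "w \<in> A" for s w
    using that by (simp add: cond_gain_def indicator_def)
  have "0 \<le> z - x * y"
  proof (rule coherent_gain_bound_nonneg[OF coh J])
    fix w
    assume "w \<in> (\<Union>j\<in>{0, 1, 2}. fst (snd (?L ! j)))"
    then have "w \<in> A"
      by auto
    then show "cond_gain ?L {0, 1, 2} (\<lambda>j. if j = 0 then 1 else if j = 1 then x else -1) w \<le> z - x * y"
      unfolding gain[OF \<open>w \<in> A\<close>] by (simp add: indicator_def algebra_simps)
  qed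
  then show "x * y \<le> z"
    by simp
  have "0 \<le> x * y + 1 - y - z"
  proof (rule coherent_gain_bound_nonneg[OF coh J])
    fix w
    assume "w \<in> (\<Union>j\<in>{0, 1, 2}. fst (snd (?L ! j)))"
    then have "w \<in> A"
      by auto
    then show "cond_gain ?L {0, 1, 2} (\<lambda>j. if j = 0 then -1 else if j = 1 then 1 - x else 1) w
        \<le> x * y + 1 - y - z"
      unfolding gain[OF \<open>w \<in> A\<close>] by (simp add: indicator_def algebra_simps)
  qed
  then show "z \<le> x * y + 1 - y"
    by simp
qed

lemma chain_assessment_conditioning_events:
  assumes "J \<subseteq> {..<3}" "J \<noteq> {}"
  shows "(\<Union>j\<in>J. fst (snd (chain_assessment A B C x y z ! j))) = (if J = {0} then A \<inter> B else A)"
proof (cases "J = {0}")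
  case False
  let ?H = "\<lambda>j. fst (snd (chain_assessment A B C x y z ! j))"
  from False assms obtain j where j: "j \<in> J" "j \<noteq> 0"
    by (metis empty_iff insertI1 subsetI subset_singletonD)
  have sub: "?H i \<subseteq> A" if "i < 3" for i
    using that by (auto simp: less_Suc_eq numeral_3_eq_3)
  have "j = 1 \<or> j = 2"
    using j assms(1) by auto
  then have "?H j = A"
    by auto
  with sub j assms(1) have "(\<Union>j\<in>J. ?H j) = A"
    by blast
  then show ?thesis
    using False by simp
qed simp

lemma chain_assessment_coherent:
  fixes x y z :: real
  assumes "logically_independent3 A B C" and x: "x \<in> {0..1}" and y: "y \<in> {0..1}"
    and z: "x * y \<le> z" "z \<le> x * y + 1 - y"
  shows "coherent (chain_assessment A B C x y z)"
proof -
  let ?L = "chain_assessment A B C x y z"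
  obtain \<omega> :: "bool \<times> bool \<Rightarrow> 'a"
    where \<omega>: "\<And>i. \<omega> i \<in> A" "\<And>i. \<omega> i \<in> B \<longleftrightarrow> fst i" "\<And>i. \<omega> i \<in> C \<longleftrightarrow> snd i"
    using logically_independent3_atoms[OF assms(1)] by blast
  define P :: "bool \<times> bool \<Rightarrow> real" where
    "P = (\<lambda>(b, c). if b then (if c then x * y else y - x * y) else (if c then z - x * y else 1 - y - z + x * y))"
  define Q :: "bool \<times> bool \<Rightarrow> real" where
    "Q = (\<lambda>(b, c). if b then (if c then x else 1 - x) else 0)"
  have "x * y \<le> y"
    using x y by (simp add: mult_left_le_one_le)
  then have P_nonneg: "\<forall>i\<in>UNIV. 0 \<le> P i" and Q_nonneg: "\<forall>i\<in>UNIV. 0 \<le> Q i"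
    using x y z by (auto simp: P_def Q_def)
  have P_fair: "(\<Sum>i\<in>UNIV. P i * cond_gain ?L {j} (\<lambda>_. 1) (\<omega> i)) = 0" if "j < 3" for j
  proof -
    have "j = 0 \<or> j = 1 \<or> j = 2"
      using that by auto
    then show ?thesis
      using \<omega> by (elim disjE)
        (simp_all add: sum_UNIV_bool_pair P_def cond_gain_def indicator_def algebra_simps)
  qed
  have Q_fair: "(\<Sum>i\<in>UNIV. Q i * cond_gain ?L {0} (\<lambda>_. 1) (\<omega> i)) = 0"
    using \<omega> by (simp add: sum_UNIV_bool_pair Q_def cond_gain_def indicator_def algebra_simps)
  show ?thesis
  proof (rule coherentI_fair_distributions[of UNIV _ \<omega>])
    fix j
    assume "j < length ?L"
    then show "fst (snd (?L ! j)) \<noteq> {}"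
      using \<omega>[of "(True, True)"] by (auto simp: less_Suc_eq)
  next
    fix J
    assume J: "J \<subseteq> {..<length ?L}" "J \<noteq> {}"
    then have conditioning: "(\<Union>j\<in>J. fst (snd (?L ! j))) = (if J = {0} then A \<inter> B else A)"
      by (intro chain_assessment_conditioning_events) auto
    show "\<exists>p. (\<forall>i\<in>UNIV. 0 \<le> p i) \<and> sum p UNIV = 1 \<and>
           (\<forall>i\<in>UNIV. 0 < p i \<longrightarrow> \<omega> i \<in> (\<Union>j\<in>J. fst (snd (?L ! j)))) \<and>
           (\<forall>j\<in>J. (\<Sum>i\<in>UNIV. p i * cond_gain ?L {j} (\<lambda>_. 1) (\<omega> i)) = 0)"
    proof (cases "J = {0}")
      case True
      then show ?thesis
        using conditioning Q_nonneg Q_fair \<omega>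
        by (intro exI[of _ Q]) (auto simp: sum_UNIV_bool_pair Q_def)
    next
      case False
      then show ?thesis
        using conditioning J P_nonneg P_fair \<omega>
        by (intro exI[of _ P]) (auto simp: sum_UNIV_bool_pair P_def)
    qed
  qed simp
qed

lemma chain_bounds_range:
  fixes \<alpha>1 \<beta>1 \<alpha>2 \<beta>2 :: real
  assumes "0 \<le> \<alpha>1" "\<alpha>1 \<le> \<beta>1" "\<beta>1 \<le> 1" "0 \<le> \<alpha>2" "\<alpha>2 \<le> \<beta>2" "\<beta>2 \<le> 1"
  shows "{z. \<exists>x\<in>{\<alpha>1..\<beta>1}. \<exists>y\<in>{\<alpha>2..\<beta>2}. x * y \<le> z \<and> z \<le> x * y + 1 - y}
       = {\<alpha>1 * \<alpha>2 .. \<beta>1 * \<alpha>2 + 1 - \<alpha>2}"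
proof (intro set_eqI iffI)
  fix z
  assume "z \<in> {z. \<exists>x\<in>{\<alpha>1..\<beta>1}. \<exists>y\<in>{\<alpha>2..\<beta>2}. x * y \<le> z \<and> z \<le> x * y + 1 - y}"
  then obtain x y where xy: "\<alpha>1 \<le> x" "x \<le> \<beta>1" "\<alpha>2 \<le> y" "y \<le> \<beta>2"
    and z: "x * y \<le> z" "z \<le> x * y + 1 - y"
    by auto
  have "\<alpha>1 * \<alpha>2 \<le> x * y"
    using xy assms by (intro mult_mono) auto
  moreover have "\<alpha>2 * (1 - \<beta>1) \<le> y * (1 - x)"
    using xy assms by (intro mult_mono) auto
  ultimately show "z \<in> {\<alpha>1 * \<alpha>2 .. \<beta>1 * \<alpha>2 + 1 - \<alpha>2}"
    using z by (auto simp: algebra_simps)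
next
  fix z
  assume z: "z \<in> {\<alpha>1 * \<alpha>2 .. \<beta>1 * \<alpha>2 + 1 - \<alpha>2}"
  obtain x where x: "x \<in> {\<alpha>1..\<beta>1}" "x * \<alpha>2 \<le> z" "z \<le> x * \<alpha>2 + 1 - \<alpha>2"
  proof (cases "z \<le> \<alpha>1 * \<alpha>2 + 1 - \<alpha>2")
    case True
    then show thesis
      using that[of \<alpha>1] z assms by auto
  next
    case False
    with z have "0 < \<alpha>2"
      using assms by (cases "\<alpha>2 = 0") auto
    define x where "x = (z - 1 + \<alpha>2) / \<alpha>2"
    have x: "x * \<alpha>2 = z - 1 + \<alpha>2"
      using \<open>0 < \<alpha>2\<close> by (simp add: x_def)
    have "\<alpha>1 * \<alpha>2 \<le> x * \<alpha>2" "x * \<alpha>2 \<le> \<beta>1 * \<alpha>2"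
      using False z x by auto
    then have "x \<in> {\<alpha>1..\<beta>1}"
      using \<open>0 < \<alpha>2\<close> by simp
    then show thesis
      using that[of x] x assms by auto
  qed
  moreover have "\<alpha>2 \<in> {\<alpha>2..\<beta>2}"
    using assms by simp
  ultimately show "z \<in> {z. \<exists>x\<in>{\<alpha>1..\<beta>1}. \<exists>y\<in>{\<alpha>2..\<beta>2}. x * y \<le> z \<and> z \<le> x * y + 1 - y}"
    by blast
qed

lemma coherent_chain_assessment_iff:
  fixes x y z :: real
  assumes "logically_independent3 A B C" "x \<in> {0..1}" "y \<in> {0..1}"
  shows "coherent (chain_assessment A B C x y z) \<longleftrightarrow> x * y \<le> z \<and> z \<le> x * y + 1 - y"
  using chain_assessment_bounds_if_coherent chain_assessment_coherent[OF assms] by blast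

theorem mainTheorem3:
  fixes A B C :: "'w set"
  assumes "logically_independent3 A B C"
  shows "(\<forall>x y z :: real. x \<in> {0..1} \<longrightarrow> y \<in> {0..1} \<longrightarrow>
            (coherent [(C, A \<inter> B, x), (B, A, y), (C, A, z)] \<longleftrightarrow>
             x * y \<le> z \<and> z \<le> x * y + 1 - y))
       \<and> (\<forall>\<alpha>1 \<beta>1 \<alpha>2 \<beta>2 :: real.
            0 \<le> \<alpha>1 \<longrightarrow> \<alpha>1 \<le> \<beta>1 \<longrightarrow> \<beta>1 \<le> 1 \<longrightarrow>
            0 \<le> \<alpha>2 \<longrightarrow> \<alpha>2 \<le> \<beta>2 \<longrightarrow> \<beta>2 \<le> 1 \<longrightarrow>
            {z. \<exists>x \<in> {\<alpha>1..\<beta>1}. \<exists>y \<in> {\<alpha>2..\<beta>2}.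
                  coherent [(C, A \<inter> B, x), (B, A, y), (C, A, z)]}
            = {\<alpha>1 * \<alpha>2 .. \<beta>1 * \<alpha>2 + 1 - \<alpha>2})"
proof (intro conjI allI impI)
  fix x y z :: real
  assume "x \<in> {0..1}" "y \<in> {0..1}"
  then show "coherent (chain_assessment A B C x y z) \<longleftrightarrow> x * y \<le> z \<and> z \<le> x * y + 1 - y"
    by (rule coherent_chain_assessment_iff[OF assms])
next
  fix \<alpha>1 \<beta>1 \<alpha>2 \<beta>2 :: real
  assume bounds: "0 \<le> \<alpha>1" "\<alpha>1 \<le> \<beta>1" "\<beta>1 \<le> 1" "0 \<le> \<alpha>2" "\<alpha>2 \<le> \<beta>2" "\<beta>2 \<le> 1"
  have "{z. \<exists>x\<in>{\<alpha>1..\<beta>1}. \<exists>y\<in>{\<alpha>2..\<beta>2}. coherent (chain_assessment A B C x y z)}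
      = {z. \<exists>x\<in>{\<alpha>1..\<beta>1}. \<exists>y\<in>{\<alpha>2..\<beta>2}. x * y \<le> z \<and> z \<le> x * y + 1 - y}"
    using bounds by (intro Collect_cong bex_cong refl coherent_chain_assessment_iff[OF assms]) auto
  also have "\<dots> = {\<alpha>1 * \<alpha>2 .. \<beta>1 * \<alpha>2 + 1 - \<alpha>2}"
    by (rule chain_bounds_range[OF bounds])
  finally show "{z. \<exists>x\<in>{\<alpha>1..\<beta>1}. \<exists>y\<in>{\<alpha>2..\<beta>2}. coherent (chain_assessment A B C x y z)}
      = {\<alpha>1 * \<alpha>2 .. \<beta>1 * \<alpha>2 + 1 - \<alpha>2}" .
qed

end
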